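(* Fix $n$. No two non-isomorphic graphs in $\mathbb{K}^{n_{1},n_{2},\ldots,n_{k}}_{n}=\{K^{n_{1},\ldots,n_{k}}_{n}\mid k\ge2,\ n_i\ge1,\ \sum_{i=1}^{k}n_{i}+1=n\}$ are $D$-cospectral.
   Context: Two connected graphs are $D$-cospectral if their distance matrices have the same spectrum. $K^{n_{1},\ldots,n_{k}}_{n}$ denotes the graph on $n$ vertices having a vertex $v$ of degree $n-1$ such that $G-v$ is the disjoint union of complete graphs $K_{n_1},\dots,K_{n_k}$. *)

theory Defs
  imports "Jordan_Normal_Form.Char_Poly"
begin

definition graph_edges :: "nat \<Rightarrow> (nat \<Rightarrow> nat \<Rightarrow> bool) \<Rightarrow> (nat \<times> nat) set" where
  "graph_edges n A = {(x, y). x < n \<and> y < n \<and> A x y}"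

definition graph_dist :: "nat \<Rightarrow> (nat \<Rightarrow> nat \<Rightarrow> bool) \<Rightarrow> nat \<Rightarrow> nat \<Rightarrow> nat" where
  "graph_dist n A u v = (LEAST d. (u, v) \<in> (graph_edges n A) ^^ d)"

definition dist_matrix :: "nat \<Rightarrow> (nat \<Rightarrow> nat \<Rightarrow> bool) \<Rightarrow> real mat" where
  "dist_matrix n A = mat n n (\<lambda>(i, j). real (graph_dist n A i j))"

text \<open>D-cospectral: distance matrices have the same spectrum (with multiplicities),
  i.e. the same characteristic polynomial.\<close>
definition D_cospectral :: "nat \<Rightarrow> (nat \<Rightarrow> nat \<Rightarrow> bool) \<Rightarrow> (nat \<Rightarrow> nat \<Rightarrow> bool) \<Rightarrow> bool" where
  "D_cospectral n A B \<longleftrightarrow> char_poly (dist_matrix n A) = char_poly (dist_matrix n B)"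

definition graph_iso :: "nat \<Rightarrow> (nat \<Rightarrow> nat \<Rightarrow> bool) \<Rightarrow> (nat \<Rightarrow> nat \<Rightarrow> bool) \<Rightarrow> bool" where
  "graph_iso n A B \<longleftrightarrow> (\<exists>f. bij_betw f {0..<n} {0..<n} \<and>
      (\<forall>x<n. \<forall>y<n. A x y \<longleftrightarrow> B (f x) (f y)))"

text \<open>The graph K_n^{n_1,...,n_k} for ns = [n_1,...,n_k], n = sum ns + 1:
  vertex 0 is adjacent to all others; the i-th block of vertices
  {s_i+1 .. s_i+n_i} (s_i = n_1+...+n_{i-1}) induces a clique K_{n_i}.\<close>
definition in_block :: "nat list \<Rightarrow> nat \<Rightarrow> nat \<Rightarrow> bool" where
  "in_block ns i u \<longleftrightarrow> sum_list (take i ns) < u \<and> u \<le> sum_list (take (Suc i) ns)"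

definition K_adj :: "nat list \<Rightarrow> nat \<Rightarrow> nat \<Rightarrow> bool" where
  "K_adj ns u v \<longleftrightarrow> u \<noteq> v \<and>
     (u = 0 \<or> v = 0 \<or> (\<exists>i<length ns. in_block ns i u \<and> in_block ns i v))"

definition K_family :: "nat \<Rightarrow> nat list set" where
  "K_family n = {ns. length ns \<ge> 2 \<and> (\<forall>m\<in>set ns. m \<ge> 1) \<and> sum_list ns + 1 = n}"

end

theory Submission
  imports Defs
begin

text \<open>
  Split the vertices of \<open>K\<^sub>n\<^bsup>n\<^sub>1,...,n\<^sub>k\<^esup>\<close> into classes: the centre and the k blocks.
  The entry of \<open>D + I\<close> between two vertices depends only on their classes, so applying
  \<open>det (I + UV) = det (I + VU)\<close> twice reduces \<open>det (tI - (D + I))\<close> first to a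
  \<open>(k+1) \<times> (k+1)\<close> and then to a \<open>2 \<times> 2\<close> determinant. This gives, for \<open>t > 0\<close>,
  \<open>\<chi>\<^sub>D(t - 1) = t\<^bsup>n-k-1\<^esup> F(t)\<close> with \<open>F = (t - 1) Q - (2t - 1)(k Q - t Q')\<close> and
  \<open>Q = \<Prod>(t + n\<^sub>i)\<close>. As \<open>F(0) = (k - 1) Q(0) \<noteq> 0\<close>, the characteristic polynomial
  determines k and F. The map \<open>Q \<mapsto> F\<close> is injective, since it multiplies the leading
  coefficient of a polynomial of degree d by the odd number \<open>2d + 1 - 2k\<close>, and Q has the
  roots \<open>-n\<^sub>i\<close>. Finally, graphs with the same multiset of block sizes are isomorphic,
  because exchanging two adjacent blocks is an isomorphism.
\<close>

lemma poly_eqI_infinite: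
  fixes p q :: "'a::idom poly"
  assumes "infinite S" and "\<And>x. x \<in> S \<Longrightarrow> poly p x = poly q x"
  shows "p = q"
proof (rule ccontr)
  assume "p \<noteq> q"
  then have "finite {x. poly (p - q) x = 0}" by (intro poly_roots_finite) simp
  moreover have "S \<subseteq> {x. poly (p - q) x = 0}" using assms(2) by auto
  ultimately show False using assms(1) finite_subset by blast
qed

fun block_poly :: "nat list \<Rightarrow> real poly" where
  "block_poly [] = 1"
| "block_poly (a # ns) = [:real a, 1:] * block_poly ns"

lemma poly_block_poly: "poly (block_poly ns) t = (\<Prod>a\<leftarrow>ns. t + real a)"
  by (induction ns) (auto simp: algebra_simps)

lemma block_poly_nonzero: "block_poly ns \<noteq> 0"
  by (induction ns) (simp_all del: mult_pCons_left)

lemma order_block_poly: "order (- real m) (block_poly ns) = count (mset ns) m"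
proof (induction ns)
  case (Cons a ns)
  have "order (- real m) [:real a, 1:] = (if a = m then 1 else 0)"
    using order_power_n_n[of "- real m" 1] by (auto simp: order_eq_0_iff)
  then show ?case
    using Cons block_poly_nonzero[of "a # ns"] by (simp del: mult_pCons_left add: order_mult)
qed simp

lemma mset_eq_if_block_poly_eq: "block_poly ns = block_poly ms \<Longrightarrow> mset ns = mset ms"
  by (rule multiset_eqI) (metis order_block_poly)

definition dist_operator :: "nat \<Rightarrow> real poly \<Rightarrow> real poly" where
  "dist_operator k p =
    [:-1, 1:] * p - [:-1, 2:] * (Polynomial.smult (real k) p - [:0, 1:] * pderiv p)"

lemma dist_operator_diff: "dist_operator k (p - q) = dist_operator k p - dist_operator k q"
  unfolding dist_operator_def pderiv_diff smult_diff_right by (simp only: right_diff_distrib)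

lemma dist_operator_eq_0_iff: "dist_operator k p = 0 \<longleftrightarrow> p = 0"
proof
  assume L: "dist_operator k p = 0"
  show "p = 0"
  proof (rule ccontr)
    assume "p \<noteq> 0"
    define d where "d = degree p"
    have "coeff p (Suc d) = 0" by (simp add: coeff_eq_0 d_def)
    then have "coeff (dist_operator k p) (Suc d) = coeff p d * (1 + 2 * real d - 2 * real k)"
      unfolding dist_operator_def by (cases d) (simp_all add: coeff_pderiv algebra_simps)
    moreover have "coeff p d \<noteq> 0" using \<open>p \<noteq> 0\<close> by (simp add: d_def)
    moreover have "1 + 2 * real d - 2 * real k \<noteq> 0"
    proof
      assume "1 + 2 * real d - 2 * real k = 0"
      then have "1 + 2 * d = 2 * k" by linarith
      then show False by presburger
    qed
    ultimately show False using L by simp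
  qed
qed (simp add: dist_operator_def)

lemma poly_dist_operator_0: "poly (dist_operator k p) 0 = (real k - 1) * poly p 0"
  by (simp add: dist_operator_def algebra_simps)

lemma poly_block_poly_weighted:
  assumes "t > 0"
  shows "poly (Polynomial.smult (real (length ns)) (block_poly ns)
      - [:0, 1:] * pderiv (block_poly ns)) t
    = poly (block_poly ns) t * (\<Sum>a\<leftarrow>ns. real a / (t + real a))"
proof (induction ns)
  case (Cons a ns)
  let ?Q = "poly (block_poly ns) t" and ?Q' = "poly (pderiv (block_poly ns)) t"
    and ?S = "\<Sum>a\<leftarrow>ns. real a / (t + real a)"
  have "t + real a \<noteq> 0" using assms by linarith
  have "poly (Polynomial.smult (real (length (a # ns))) (block_poly (a # ns))
      - [:0, 1:] * pderiv (block_poly (a # ns))) t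
      = (t + real a) * (real (length ns) * ?Q - t * ?Q') + real a * ?Q"
    by (simp add: pderiv_add pderiv_smult pderiv_pCons algebra_simps)
  also have "\<dots> = (t + real a) * (?Q * ?S) + real a * ?Q"
    using Cons.IH by simp
  also have "\<dots> = poly (block_poly (a # ns)) t * (\<Sum>a\<leftarrow>a # ns. real a / (t + real a))"
    using \<open>t + real a \<noteq> 0\<close> by (simp add: field_simps)
  finally show ?case .
qed simp

definition dist_poly :: "nat list \<Rightarrow> real poly" where
  "dist_poly ns = dist_operator (length ns) (block_poly ns)"

lemma poly_dist_poly:
  assumes "t > 0"
  shows "poly (dist_poly ns) t
    = poly (block_poly ns) t * (t - 1 - (2 * t - 1) * (\<Sum>a\<leftarrow>ns. real a / (t + real a)))"
  unfolding dist_poly_def dist_operator_def poly_diff[of "[:-1, 1:] * _"] poly_mult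
    poly_block_poly_weighted[OF assms]
  by (simp add: algebra_simps)

lemma length_le_sum_list: "\<forall>m\<in>set ns. 1 \<le> m \<Longrightarrow> length ns \<le> sum_list ns"
  by (induction ns) auto

lemma poly_dist_poly_0_neq:
  assumes "ns \<in> K_family n"
  shows "poly (dist_poly ns) 0 \<noteq> 0"
proof -
  have "poly (block_poly ns) 0 \<noteq> 0"
    using assms by (auto simp: K_family_def poly_block_poly prod_list_zero_iff)
  moreover have "real (length ns) - 1 \<noteq> 0" using assms by (simp add: K_family_def)
  ultimately show ?thesis by (simp add: dist_poly_def poly_dist_operator_0)
qed

lemma mset_eq_if_dist_poly_agree:
  assumes ns: "ns \<in> K_family n" and ms: "ms \<in> K_family n"
    and agree: "\<And>t. t > 0 \<Longrightarrow> t ^ (n - length ns - 1) * poly (dist_poly ns) t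
      = t ^ (n - length ms - 1) * poly (dist_poly ms) t"
  shows "mset ns = mset ms"
proof -
  let ?a = "n - length ns - 1" and ?b = "n - length ms - 1"
  have eq: "monom 1 ?a * dist_poly ns = monom 1 ?b * dist_poly ms"
    by (rule poly_eqI_infinite[of "{0<..}"])
      (use agree infinite_Ioi[of "0::real"] in \<open>auto simp: poly_monom\<close>)
  have "dist_poly ns \<noteq> 0" "dist_poly ms \<noteq> 0"
    using poly_dist_poly_0_neq[OF ns] poly_dist_poly_0_neq[OF ms] by auto
  moreover have "order 0 (dist_poly ns) = 0" "order 0 (dist_poly ms) = 0"
    using poly_dist_poly_0_neq[OF ns] poly_dist_poly_0_neq[OF ms] by (simp_all add: order_root)
  ultimately have "?a = ?b"
    using arg_cong[OF eq, of "order 0"] by (simp add: order_mult)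
  then have "dist_poly ns = dist_poly ms" using eq by simp
  moreover have "length ns = length ms"
    using \<open>?a = ?b\<close> ns ms length_le_sum_list[of ns] length_le_sum_list[of ms]
    by (auto simp: K_family_def)
  ultimately have "dist_operator (length ns) (block_poly ns - block_poly ms) = 0"
    by (simp add: dist_poly_def dist_operator_diff)
  then have "block_poly ns = block_poly ms" by (simp add: dist_operator_eq_0_iff)
  then show ?thesis by (rule mset_eq_if_block_poly_eq)
qed

lemma det_one_add_mult_commute:
  fixes U V :: "'a :: idom mat"
  assumes U: "U \<in> carrier_mat N K" and V: "V \<in> carrier_mat K N"
  shows "det (1\<^sub>m N + U * V) = det (1\<^sub>m K + V * U)"
proof -
  let ?P = "four_block_mat (1\<^sub>m N) (-U) V (1\<^sub>m K)"
  let ?L = "four_block_mat (1\<^sub>m N) (0\<^sub>m N K) (-V) (1\<^sub>m K)"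
  let ?R = "four_block_mat (1\<^sub>m N) U (0\<^sub>m K N) (1\<^sub>m K)"
  have PL: "?P * ?L = four_block_mat (1\<^sub>m N + U * V) (-U) (0\<^sub>m K N) (1\<^sub>m K)"
    by (subst mult_four_block_mat[of _ N N _ K _ K]) (use U V in auto)
  have PR: "?P * ?R = four_block_mat (1\<^sub>m N) (0\<^sub>m N K) V (1\<^sub>m K + V * U)"
    by (subst mult_four_block_mat[of _ N N _ K _ K]) (use U V in auto)
  have P: "?P \<in> carrier_mat (N + K) (N + K)" and L: "?L \<in> carrier_mat (N + K) (N + K)"
    and R: "?R \<in> carrier_mat (N + K) (N + K)" using U V by auto
  have "det ?L = 1"
    by (subst det_four_block_mat_upper_right_zero[of _ N _ K]) (use U V in auto)
  have "det ?R = 1"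
    by (subst det_four_block_mat_lower_left_zero[of _ N _ K]) (use U V in auto)
  have "det (1\<^sub>m N + U * V) = det (?P * ?L)"
    unfolding PL by (subst det_four_block_mat_lower_left_zero[of _ N _ K]) (use U V in auto)
  also have "\<dots> = det (?P * ?R)"
    using det_mult[OF P L] det_mult[OF P R] \<open>det ?L = 1\<close> \<open>det ?R = 1\<close> by simp
  also have "\<dots> = det (1\<^sub>m K + V * U)"
    unfolding PR by (subst det_four_block_mat_upper_right_zero[of _ N _ K]) (use U V in auto)
  finally show ?thesis .
qed

lemma det_diag_add_mult:
  fixes U V :: "'a :: field mat"
  assumes U: "U \<in> carrier_mat N K" and V: "V \<in> carrier_mat K N"
    and d: "\<And>i. i < N \<Longrightarrow> d i \<noteq> 0"
  shows "det (mat N N (\<lambda>(i, j). if i = j then d i else 0) + U * V)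
    = (\<Prod>i = 0..<N. d i) * det (1\<^sub>m K + V * mat N K (\<lambda>(i, a). U $$ (i, a) / d i))"
proof -
  let ?U' = "mat N K (\<lambda>(i, a). U $$ (i, a) / d i)"
  let ?X = "1\<^sub>m N + ?U' * V"
  have X: "?X \<in> carrier_mat N N" using V by auto
  have "mat N N (\<lambda>(i, j). if i = j then d i else 0) + U * V
      = mat\<^sub>r N N (\<lambda>i. d i \<cdot>\<^sub>v row ?X i)"
  proof (rule eq_matI)
    fix i j assume "i < dim_row (mat\<^sub>r N N (\<lambda>i. d i \<cdot>\<^sub>v row ?X i))"
      "j < dim_col (mat\<^sub>r N N (\<lambda>i. d i \<cdot>\<^sub>v row ?X i))"
    then have ij: "i < N" "j < N" by auto
    have "d i * (\<Sum>l = 0..<K. U $$ (i, l) / d i * V $$ (l, j))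
        = (\<Sum>l = 0..<K. U $$ (i, l) * V $$ (l, j))"
      using d[OF ij(1)] by (simp add: sum_distrib_left)
    then show "(mat N N (\<lambda>(i, j). if i = j then d i else 0) + U * V) $$ (i, j)
        = mat\<^sub>r N N (\<lambda>i. d i \<cdot>\<^sub>v row ?X i) $$ (i, j)"
      using ij U V by (simp add: mat_of_rows_def scalar_prod_def algebra_simps)
  qed (use U V in auto)
  also have "det \<dots> = (\<Prod>i = 0..<N. d i) * det (mat\<^sub>r N N (\<lambda>i. row ?X i))"
    by (rule det_rows_mul) (use X in auto)
  also have "mat\<^sub>r N N (\<lambda>i. row ?X i) = ?X"
    by (rule eq_matI) (use X in auto)
  also have "det ?X = det (1\<^sub>m K + V * ?U')"
    by (rule det_one_add_mult_commute) (use V in auto)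
  finally show ?thesis .
qed

lemma det_2x2:
  fixes A :: "'a :: comm_ring_1 mat"
  assumes A: "A \<in> carrier_mat 2 2"
  shows "det A = A $$ (0, 0) * A $$ (1, 1) - A $$ (0, 1) * A $$ (1, 0)"
proof -
  have "det A = (\<Sum>j<2. A $$ (0, j) * cofactor A 0 j)"
    by (rule laplace_expansion_row[OF A]) simp
  also have "\<dots> = A $$ (0, 0) * cofactor A 0 0 + A $$ (0, 1) * cofactor A 0 1"
    by (simp add: numeral_2_eq_2)
  also have "cofactor A 0 0 = A $$ (1, 1)"
    using A mat_delete_carrier[OF A, of 0 0] unfolding cofactor_def
    by (simp add: det_single mat_delete_def)
  also have "cofactor A 0 1 = - A $$ (1, 0)"
    using A mat_delete_carrier[OF A, of 0 1] unfolding cofactor_def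
    by (simp add: det_single mat_delete_def)
  finally show ?thesis by (simp add: algebra_simps)
qed

lemma det_class_constant:
  fixes g :: "nat \<Rightarrow> nat \<Rightarrow> real" and c :: "nat \<Rightarrow> nat"
  assumes t: "t \<noteq> 0" and c: "\<And>i. i < N \<Longrightarrow> c i < K"
  shows "det (mat N N (\<lambda>(i, j). (if i = j then t else 0) - g (c i) (c j)))
    = t ^ N * det (mat K K (\<lambda>(a, b).
        (if a = b then 1 else 0) - g a b * real (card {i. i < N \<and> c i = b}) / t))"
proof -
  define U where "U = mat N K (\<lambda>(i, a). of_bool (c i = a) :: real)"
  define V where "V = mat K N (\<lambda>(a, j). - g a (c j))"
  have U: "U \<in> carrier_mat N K" and V: "V \<in> carrier_mat K N" by (auto simp: U_def V_def)
  have "mat N N (\<lambda>(i, j). (if i = j then t else 0) - g (c i) (c j))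
      = mat N N (\<lambda>(i, j). if i = j then t else 0) + U * V"
  proof (rule eq_matI)
    fix i j assume "i < dim_row (mat N N (\<lambda>(i, j). if i = j then t else 0) + U * V)"
      "j < dim_col (mat N N (\<lambda>(i, j). if i = j then t else 0) + U * V)"
    then have ij: "i < N" "j < N" using U V by auto
    have "{0..<K} \<inter> {a. c i = a} = {c i}" using c[OF ij(1)] by auto
    then show "mat N N (\<lambda>(i, j). (if i = j then t else 0) - g (c i) (c j)) $$ (i, j)
        = (mat N N (\<lambda>(i, j). if i = j then t else 0) + U * V) $$ (i, j)"
      using ij U V unfolding U_def V_def by (simp add: scalar_prod_def sum_negf)
  qed (use U V in auto)
  also have "det \<dots> = t ^ N * det (1\<^sub>m K + V * mat N K (\<lambda>(i, a). U $$ (i, a) / t))"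
    using det_diag_add_mult[OF U V, of "\<lambda>_. t"] t by simp
  also have "1\<^sub>m K + V * mat N K (\<lambda>(i, a). U $$ (i, a) / t) = mat K K (\<lambda>(a, b).
        (if a = b then 1 else 0) - g a b * real (card {i. i < N \<and> c i = b}) / t)"
  proof (rule eq_matI)
    fix a b assume "a < dim_row (mat K K (\<lambda>(a, b).
        (if a = b then 1 else 0) - g a b * real (card {i. i < N \<and> c i = b}) / t))"
      "b < dim_col (mat K K (\<lambda>(a, b).
        (if a = b then 1 else 0) - g a b * real (card {i. i < N \<and> c i = b}) / t))"
    then have ab: "a < K" "b < K" by auto
    have "{0..<N} \<inter> {i. c i = b} = {i. i < N \<and> c i = b}" by auto
    then show "(1\<^sub>m K + V * mat N K (\<lambda>(i, a). U $$ (i, a) / t)) $$ (a, b)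
        = mat K K (\<lambda>(a, b).
            (if a = b then 1 else 0) - g a b * real (card {i. i < N \<and> c i = b}) / t) $$ (a, b)"
      using ab V unfolding U_def V_def
      by (simp add: scalar_prod_def sum_negf sum_divide_distrib[symmetric])
  qed (use V in auto)
  finally show ?thesis .
qed

text \<open>The entry of \<open>D + I\<close> between vertices of classes a and b, class 0 being the centre.\<close>
definition class_weight :: "nat \<Rightarrow> nat \<Rightarrow> real" where
  "class_weight a b = (if a = b \<or> a = 0 \<or> b = 0 then 1 else 2)"

lemma det_class_weight_matrix:
  fixes s :: "nat \<Rightarrow> real"
  assumes t: "t > 0" and s: "\<And>a. s a \<ge> 0" and K: "K > 0"
  defines "\<tau> \<equiv> s 0 / (t + s 0)" and "\<rho> \<equiv> \<Sum>b = 1..<K. s b / (t + s b)"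
  shows "det (mat K K (\<lambda>(a, b). (if a = b then 1 else 0) - class_weight a b * s b / t))
    = (\<Prod>a = 0..<K. 1 + s a / t)
      * ((1 - \<tau> - 2 * \<rho>) * (1 - \<tau>) + \<tau> * (\<rho> - \<tau>))"
proof -
  define d where "d a = 1 + s a / t" for a
  have d: "d a \<noteq> 0" for a unfolding d_def using divide_nonneg_pos[OF s[of a] t] by linarith
  \<comment> \<open>\<open>class_weight + I = 2\<one>\<one>\<^sup>T - e\<^sub>0\<one>\<^sup>T - \<one>e\<^sub>0\<^sup>T + 2e\<^sub>0e\<^sub>0\<^sup>T\<close> has rank 2\<close>
  define U where "U = mat K 2 (\<lambda>(a, p). if p = 0 \<or> a = 0 then 1 else 0 :: real)"
  define V where "V = mat 2 K (\<lambda>(p, b).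
    - (if p = 0 then (if b = 0 then 1 else 2) else (if b = 0 then 1 else -1)) * s b / t)"
  define U' where "U' = mat K 2 (\<lambda>(a, p). U $$ (a, p) / d a)"
  have U: "U \<in> carrier_mat K 2" and V: "V \<in> carrier_mat 2 K"
    and U': "U' \<in> carrier_mat K 2" by (auto simp: U_def V_def U'_def)
  have "mat K K (\<lambda>(a, b). (if a = b then 1 else 0) - class_weight a b * s b / t)
      = mat K K (\<lambda>(a, b). if a = b then d a else 0) + U * V"
    by (rule eq_matI) (use t in \<open>auto simp: U_def V_def d_def class_weight_def scalar_prod_def
        numeral_2_eq_2 field_simps\<close>)
  also have "det \<dots> = (\<Prod>a = 0..<K. d a) * det (1\<^sub>m 2 + V * U')"
    unfolding U'_def by (rule det_diag_add_mult[OF U V d])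
  also have "det (1\<^sub>m 2 + V * U')
      = (1 - \<tau> - 2 * \<rho>) * (1 - \<tau>) + \<tau> * (\<rho> - \<tau>)"
  proof -
    have w: "V $$ (p, b) * U' $$ (b, q)
        = - (if p = 0 then (if b = 0 then 1 else 2) else (if b = 0 then 1 else -1))
          * (if q = 0 \<or> b = 0 then 1 else 0) * (s b / (t + s b))"
      if "p < 2" "q < 2" "b < K" for p q b
    proof -
      have "t * d b = t + s b" for b using t by (simp add: d_def field_simps)
      then show ?thesis using that unfolding U_def V_def U'_def by (simp add: mult.assoc)
    qed
    have VU': "(V * U') $$ (p, q)
        = V $$ (p, 0) * U' $$ (0, q) + (\<Sum>b = 1..<K. V $$ (p, b) * U' $$ (b, q))"
      if "p < 2" "q < 2" for p q
      using that U' V K by (simp add: scalar_prod_def sum.atLeast_Suc_lessThan)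
    have entries: "(V * U') $$ (0, 0) = - \<tau> - 2 * \<rho>" "(V * U') $$ (0, 1) = - \<tau>"
      "(V * U') $$ (1, 0) = \<rho> - \<tau>" "(V * U') $$ (1, 1) = - \<tau>"
      using VU'[of 0 0] VU'[of 0 1] VU'[of 1 0] VU'[of 1 1]
      by (simp_all add: w K \<tau>_def \<rho>_def sum_negf sum_distrib_left)
    have "det (1\<^sub>m 2 + V * U') = (1 + (V * U') $$ (0, 0)) * (1 + (V * U') $$ (1, 1))
        - (V * U') $$ (0, 1) * (V * U') $$ (1, 0)"
      using U' V by (subst det_2x2) (auto simp del: index_mult_mat(1))
    then show ?thesis unfolding entries by (simp add: algebra_simps)
  qed
  finally show ?thesis by (simp add: d_def)
qed

lemma graph_dist_refl: "graph_dist n A u u = 0"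
  unfolding graph_dist_def by (simp add: Least_eq_0)

lemma graph_dist_eq_1:
  assumes "u < n" "v < n" "u \<noteq> v" "A u v"
  shows "graph_dist n A u v = 1"
  unfolding graph_dist_def
proof (rule Least_equality)
  show "(u, v) \<in> graph_edges n A ^^ 1" using assms by (simp add: graph_edges_def)
next
  fix d assume "(u, v) \<in> graph_edges n A ^^ d"
  then show "1 \<le> d" using assms(3) by (cases d) auto
qed

lemma graph_dist_eq_2:
  assumes "u < n" "v < n" "w < n" "u \<noteq> v" "\<not> A u v" "A u w" "A w v"
  shows "graph_dist n A u v = 2"
  unfolding graph_dist_def
proof (rule Least_equality)
  have "(u, v) \<in> graph_edges n A O graph_edges n A"
    using assms by (auto simp: graph_edges_def)
  then show "(u, v) \<in> graph_edges n A ^^ 2" by (simp add: numeral_2_eq_2)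
next
  fix d assume "(u, v) \<in> graph_edges n A ^^ d"
  then show "2 \<le> d" using assms(4,5) by (cases d; cases "d - 1") (auto simp: graph_edges_def)
qed

lemma sum_list_take_mono:
  fixes ns :: "nat list"
  assumes "i \<le> j"
  shows "sum_list (take i ns) \<le> sum_list (take j ns)"
proof -
  obtain m where "j = i + m" using assms le_Suc_ex by blast
  then show ?thesis by (simp add: take_add)
qed

text \<open>The centre has class 0 and the vertices of block i have class \<open>Suc i\<close>.\<close>
definition block_class :: "nat list \<Rightarrow> nat \<Rightarrow> nat" where
  "block_class ns u = (LEAST i. u \<le> sum_list (take i ns))"

lemma block_class_eq_0_iff:
  assumes "u \<le> sum_list ns"
  shows "block_class ns u = 0 \<longleftrightarrow> u = 0"
proof
  assume "block_class ns u = 0"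
  then have "u \<le> sum_list (take 0 ns)"
    using LeastI[of "\<lambda>i. u \<le> sum_list (take i ns)" "length ns"] assms
    unfolding block_class_def by simp
  then show "u = 0" by simp
qed (simp add: block_class_def Least_eq_0)

lemma block_class_le_length: "u \<le> sum_list ns \<Longrightarrow> block_class ns u \<le> length ns"
  unfolding block_class_def by (rule Least_le) simp

lemma in_block_imp_block_class:
  assumes "in_block ns i u"
  shows "block_class ns u = Suc i"
  unfolding block_class_def
proof (rule Least_equality)
  show "u \<le> sum_list (take (Suc i) ns)" using assms by (simp add: in_block_def)
next
  fix j assume "u \<le> sum_list (take j ns)"
  moreover have "sum_list (take i ns) < u" using assms by (simp add: in_block_def)
  ultimately show "Suc i \<le> j" using sum_list_take_mono[of j i ns] by (rule_tac ccontr) simp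
qed

lemma in_block_less_length: "in_block ns i u \<Longrightarrow> i < length ns"
  unfolding in_block_def by (rule ccontr) simp

lemma in_block_block_class:
  assumes "0 < u" "u \<le> sum_list ns"
  shows "in_block ns (block_class ns u - 1) u"
proof -
  let ?P = "\<lambda>i. u \<le> sum_list (take i ns)"
  obtain i where i: "block_class ns u = Suc i"
    using assms block_class_eq_0_iff not0_implies_Suc by blast
  have "?P (Suc i)" using LeastI[of ?P "length ns"] assms(2) i by (simp add: block_class_def)
  moreover have "\<not> ?P i" using not_less_Least[of i ?P] i by (simp add: block_class_def)
  ultimately show ?thesis using i by (simp add: in_block_def)
qed

lemma K_adj_iff_block_class:
  assumes "u \<le> sum_list ns" "v \<le> sum_list ns"
  shows "K_adj ns u v
    \<longleftrightarrow> u \<noteq> v \<and> (u = 0 \<or> v = 0 \<or> block_class ns u = block_class ns v)"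
proof -
  have "(\<exists>i<length ns. in_block ns i u \<and> in_block ns i v)
      \<longleftrightarrow> block_class ns u = block_class ns v" if "u \<noteq> 0" "v \<noteq> 0"
  proof
    assume "\<exists>i<length ns. in_block ns i u \<and> in_block ns i v"
    then show "block_class ns u = block_class ns v" using in_block_imp_block_class by metis
  next
    assume "block_class ns u = block_class ns v"
    then show "\<exists>i<length ns. in_block ns i u \<and> in_block ns i v"
      using in_block_block_class[of u ns] in_block_block_class[of v ns] in_block_less_length
        that assms by auto
  qed
  then show ?thesis unfolding K_adj_def by auto
qed

lemma card_block_class_0: "card {u. u < Suc (sum_list ns) \<and> block_class ns u = 0} = 1"
proof -
  have "{u. u < Suc (sum_list ns) \<and> block_class ns u = 0} = {0}"
    using block_class_eq_0_iff[of _ ns] by auto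
  then show ?thesis by simp
qed

lemma card_block_class_Suc:
  assumes "j < length ns"
  shows "card {u. u < Suc (sum_list ns) \<and> block_class ns u = Suc j} = ns ! j"
proof -
  have "{u. u < Suc (sum_list ns) \<and> block_class ns u = Suc j}
      = {sum_list (take j ns)<..sum_list (take (Suc j) ns)}" (is "?C = ?I")
  proof
    show "?C \<subseteq> ?I"
    proof
      fix u assume u: "u \<in> ?C"
      then have "0 < u" using block_class_eq_0_iff[of u ns] by auto
      with u show "u \<in> ?I" using in_block_block_class[of u ns] by (auto simp: in_block_def)
    qed
    have "sum_list (take (Suc j) ns) \<le> sum_list ns"
      using sum_list_take_mono[of "Suc j" "length ns" ns] assms by simp
    then show "?I \<subseteq> ?C"
      using in_block_imp_block_class[of ns j] by (auto simp: in_block_def)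
  qed
  moreover have "sum_list (take (Suc j) ns) = sum_list (take j ns) + ns ! j"
    using assms by (simp add: take_Suc_conv_app_nth)
  ultimately show ?thesis by simp
qed

lemma dist_matrix_K_adj:
  assumes n: "n = Suc (sum_list ns)"
  shows "dist_matrix n (K_adj ns)
    = mat n n (\<lambda>(i, j).
        if i = j then 0 else class_weight (block_class ns i) (block_class ns j))"
  unfolding dist_matrix_def
proof (rule cong_mat)
  fix i j assume ij: "i < n" "j < n"
  then have le: "i \<le> sum_list ns" "j \<le> sum_list ns" using n by auto
  note class_0 = block_class_eq_0_iff[OF le(1)] block_class_eq_0_iff[OF le(2)]
  show "(\<lambda>(i, j). real (graph_dist n (K_adj ns) i j)) (i, j)
    = (\<lambda>(i, j). if i = j then 0 else class_weight (block_class ns i) (block_class ns j)) (i, j)"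
  proof (cases "i = j")
    case True
    then show ?thesis by (simp add: graph_dist_refl)
  next
    case False
    show ?thesis
    proof (cases "K_adj ns i j")
      case True
      then show ?thesis
        using graph_dist_eq_1[of i n j "K_adj ns", OF ij False True] False
          K_adj_iff_block_class[OF le] class_0
        by (auto simp: class_weight_def)
    next
      case nadj: False
      then have "i \<noteq> 0" "j \<noteq> 0" using False by (auto simp: K_adj_def)
      then have "graph_dist n (K_adj ns) i j = 2"
        by (intro graph_dist_eq_2[of i n j 0])
          (use ij n nadj False in \<open>auto simp: K_adj_def\<close>)
      then show ?thesis using nadj False K_adj_iff_block_class[OF le] class_0
        by (auto simp: class_weight_def)
    qed
  qed
qed auto

lemma poly_char_poly_dist_matrix_K_adj_eq_det:
  assumes n: "n = Suc (sum_list ns)" and t: "t \<noteq> 0"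
  shows "poly (char_poly (dist_matrix n (K_adj ns))) (t - 1)
    = t ^ n * det (mat (Suc (length ns)) (Suc (length ns)) (\<lambda>(a, b).
        (if a = b then 1 else 0) - class_weight a b * real ((1 # ns) ! b) / t))"
proof -
  have "poly (char_poly (dist_matrix n (K_adj ns))) (t - 1) = det (mat n n (\<lambda>(i, j).
      (if i = j then t else 0) - class_weight (block_class ns i) (block_class ns j)))"
    unfolding char_poly_def dist_matrix_K_adj[OF n]
    by (rule poly_det_cong[of _ n]) (auto simp: char_poly_matrix_def class_weight_def)
  moreover have "card {i. i < n \<and> block_class ns i = b} = (1 # ns) ! b"
    if "b < Suc (length ns)" for b
    using that card_block_class_0[of ns] card_block_class_Suc[of _ ns] n by (cases b) auto
  ultimately show ?thesis
    using det_class_constant[of t n "block_class ns" "Suc (length ns)" class_weight] t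
      block_class_le_length[of _ ns] n
    by (auto simp: less_Suc_eq_le intro!: arg_cong[where f = det] cong_mat)
qed

lemma det_class_weight_matrix_block_sizes:
  assumes t: "t > 0"
  shows "t ^ Suc (length ns) * det (mat (Suc (length ns)) (Suc (length ns)) (\<lambda>(a, b).
      (if a = b then 1 else 0) - class_weight a b * real ((1 # ns) ! b) / t))
    = poly (dist_poly ns) t"
proof -
  define k where "k = length ns"
  define s where "s b = real ((1 # ns) ! b)" for b
  define \<tau> where "\<tau> = s 0 / (t + s 0)"
  define r where "r = (\<Sum>a\<leftarrow>ns. real a / (t + real a))"
  have "(\<Sum>b = 1..<Suc k. s b / (t + s b)) = (\<Sum>j = 0..<k. s (Suc j) / (t + s (Suc j)))"
    using sum.shift_bounds_Suc_ivl[of "\<lambda>b. s b / (t + s b)" 0 k] by simp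
  also have "\<dots> = r" by (simp add: r_def s_def k_def sum.list_conv_set_nth)
  finally have "t ^ Suc k * det (mat (Suc k) (Suc k) (\<lambda>(a, b).
      (if a = b then 1 else 0) - class_weight a b * s b / t))
    = (t ^ Suc k * (\<Prod>b = 0..<Suc k. 1 + s b / t))
      * ((1 - \<tau> - 2 * r) * (1 - \<tau>) + \<tau> * (r - \<tau>))"
    using det_class_weight_matrix[OF t, of s "Suc k"] by (simp add: s_def \<tau>_def)
  also have "t ^ Suc k * (\<Prod>b = 0..<Suc k. 1 + s b / t)
      = (\<Prod>b = 0..<Suc k. (1 + s b / t) * t)"
    unfolding prod.distrib prod_constant by (simp add: mult.commute)
  also have "\<dots> = (\<Prod>b = 0..<Suc k. t + s b)"
    using t by (intro prod.cong) (simp_all add: field_simps)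
  also have "\<dots> = (t + 1) * poly (block_poly ns) t"
    unfolding prod.atLeast0_lessThan_Suc_shift
    by (simp add: s_def k_def poly_block_poly prod.list_conv_set_nth)
  also have "(t + 1) * poly (block_poly ns) t * ((1 - \<tau> - 2 * r) * (1 - \<tau>) + \<tau> * (r - \<tau>))
      = poly (dist_poly ns) t"
  proof -
    have \<tau>: "(t + 1) * \<tau> = 1" using t by (simp add: \<tau>_def s_def)
    have "(t + 1) * ((1 - \<tau> - 2 * r) * (1 - \<tau>) + \<tau> * (r - \<tau>))
        = (t + 1) * (1 - 2 * r) + (t + 1) * \<tau> * (3 * r - 2)"
      by (simp add: algebra_simps power2_eq_square)
    also have "\<dots> = t - 1 - (2 * t - 1) * r" unfolding \<tau> by (simp add: algebra_simps)
    finally show ?thesis unfolding poly_dist_poly[OF t] r_def[symmetric] mult.assoc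
      by (simp only: mult.left_commute[of "t + 1"])
  qed
  finally show ?thesis by (simp add: s_def k_def)
qed

lemma poly_char_poly_dist_matrix_K_adj:
  assumes ns: "ns \<in> K_family n" and t: "t > 0"
  shows "poly (char_poly (dist_matrix n (K_adj ns))) (t - 1)
    = t ^ (n - length ns - 1) * poly (dist_poly ns) t"
proof -
  have n: "n = Suc (sum_list ns)" using ns by (simp add: K_family_def)
  moreover have "length ns \<le> sum_list ns" using ns length_le_sum_list by (auto simp: K_family_def)
  ultimately have "t ^ n = t ^ (n - length ns - 1) * t ^ Suc (length ns)"
    by (simp flip: power_add)
  then show ?thesis
    using poly_char_poly_dist_matrix_K_adj_eq_det[OF n] det_class_weight_matrix_block_sizes[OF t] t
    by (simp add: mult.assoc)
qed

lemma graph_iso_refl: "graph_iso n A A"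
  unfolding graph_iso_def by (rule exI[of _ id]) auto

lemma graph_iso_trans:
  assumes "graph_iso n A B" and "graph_iso n B C"
  shows "graph_iso n A C"
proof -
  obtain f g
    where f: "bij_betw f {0..<n} {0..<n}" "\<forall>x<n. \<forall>y<n. A x y \<longleftrightarrow> B (f x) (f y)"
      and g: "bij_betw g {0..<n} {0..<n}" "\<forall>x<n. \<forall>y<n. B x y \<longleftrightarrow> C (g x) (g y)"
    using assms unfolding graph_iso_def by blast
  have "f x < n" if "x < n" for x using bij_betwE[OF f(1)] that by auto
  then have "\<forall>x<n. \<forall>y<n. A x y \<longleftrightarrow> C ((g \<circ> f) x) ((g \<circ> f) y)"
    using f(2) g(2) by simp
  with bij_betw_trans[OF f(1) g(1)] show ?thesis unfolding graph_iso_def by blast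
qed

lemma sum_list_take_append_Cons_Cons:
  "sum_list (take i (xs @ a # b # ys)) =
    (if i \<le> length xs then sum_list (take i xs)
     else if i = Suc (length xs) then sum_list xs + a
     else sum_list xs + a + b + sum_list (take (i - length xs - 2) ys))"
proof -
  consider "i \<le> Suc (length xs)" | m where "i = length xs + 2 + m"
    by (metis add_2_eq_Suc' le_add_diff_inverse not_less_eq_eq)
  then show ?thesis by cases (auto simp: take_append le_Suc_eq add.assoc)
qed

definition swap_intervals :: "nat \<Rightarrow> nat \<Rightarrow> nat \<Rightarrow> nat \<Rightarrow> nat" where
  "swap_intervals s a b u =
    (if s < u \<and> u \<le> s + a then u + b else if s + a < u \<and> u \<le> s + a + b then u - a else u)"

lemma swap_intervals_inverse: "swap_intervals s b a (swap_intervals s a b u) = u"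
  unfolding swap_intervals_def by auto

lemma swap_intervals_eq_0_iff: "swap_intervals s a b u = 0 \<longleftrightarrow> u = 0"
  unfolding swap_intervals_def by auto

lemma swap_intervals_le: "u \<le> m \<Longrightarrow> s + a + b \<le> m \<Longrightarrow> swap_intervals s a b u \<le> m"
  unfolding swap_intervals_def by auto

lemma in_block_swap:
  assumes "in_block (xs @ a # b # ys) i u"
  shows "in_block (xs @ b # a # ys) (transpose (length xs) (Suc (length xs)) i)
    (swap_intervals (sum_list xs) a b u)"
proof -
  let ?l = "length xs" and ?s = "sum_list xs"
  have ib: "sum_list (take i (xs @ a # b # ys)) < u"
    "u \<le> sum_list (take (Suc i) (xs @ a # b # ys))"
    using assms unfolding in_block_def by auto
  consider "Suc i \<le> ?l" | "i = ?l" | "i = Suc ?l" | "Suc ?l < i" by linarith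
  then show ?thesis
  proof cases
    case 1
    have "sum_list (take (Suc i) xs) \<le> ?s"
      using sum_list_take_mono[of "Suc i" "length xs" xs] 1 by simp
    with 1 ib show ?thesis
      by (simp add: in_block_def sum_list_take_append_Cons_Cons swap_intervals_def)
  next
    case 2
    then have "?s < u" "u \<le> ?s + a" using ib by (simp_all add: sum_list_take_append_Cons_Cons)
    with 2 show ?thesis by (simp add: in_block_def sum_list_take_append_Cons_Cons swap_intervals_def)
  next
    case 3
    then have "?s + a < u" "u \<le> ?s + a + b"
      using ib by (simp_all add: sum_list_take_append_Cons_Cons)
    with 3 show ?thesis
      by (simp add: in_block_def sum_list_take_append_Cons_Cons swap_intervals_def) arith
  next
    case 4
    then have "?s + a + b + sum_list (take (i - ?l - 2) ys) < u"
      "u \<le> ?s + a + b + sum_list (take (Suc i - ?l - 2) ys)"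
      using ib 4 unfolding sum_list_take_append_Cons_Cons by simp_all
    with 4 show ?thesis
      unfolding in_block_def sum_list_take_append_Cons_Cons swap_intervals_def by (simp add: add_ac)
  qed
qed

lemma graph_iso_K_adj_swap:
  "graph_iso (Suc (sum_list (xs @ a # b # ys))) (K_adj (xs @ a # b # ys)) (K_adj (xs @ b # a # ys))"
proof -
  let ?L = "xs @ a # b # ys" and ?L' = "xs @ b # a # ys"
  let ?n = "Suc (sum_list ?L)"
  let ?f = "swap_intervals (sum_list xs) a b" and ?g = "swap_intervals (sum_list xs) b a"
    and ?\<pi> = "transpose (length xs) (Suc (length xs))"
  have gf: "?g (?f u) = u" and fg: "?f (?g u) = u" for u by (rule swap_intervals_inverse)+
  have "?f u < ?n" "?g u < ?n" if "u < ?n" for u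
    using that by (auto simp: less_Suc_eq_le intro!: swap_intervals_le)
  then have bij: "bij_betw ?f {0..<?n} {0..<?n}"
    by (intro bij_betw_byWitness[where f' = ?g]) (use gf fg in auto)
  have same_block: "(\<exists>i<length ?L. in_block ?L i u \<and> in_block ?L i v) \<longleftrightarrow>
      (\<exists>i<length ?L'. in_block ?L' i (?f u) \<and> in_block ?L' i (?f v))" for u v
  proof
    assume "\<exists>i<length ?L. in_block ?L i u \<and> in_block ?L i v"
    then obtain i where "in_block ?L i u" "in_block ?L i v" by blast
    then have "in_block ?L' (?\<pi> i) (?f u)" "in_block ?L' (?\<pi> i) (?f v)"
      by (simp_all add: in_block_swap)
    then show "\<exists>i<length ?L'. in_block ?L' i (?f u) \<and> in_block ?L' i (?f v)"
      using in_block_less_length by blast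
  next
    assume "\<exists>i<length ?L'. in_block ?L' i (?f u) \<and> in_block ?L' i (?f v)"
    then obtain i where i: "in_block ?L' i (?f u)" "in_block ?L' i (?f v)" by blast
    have "in_block ?L (?\<pi> i) u" using in_block_swap[OF i(1)] unfolding gf .
    moreover have "in_block ?L (?\<pi> i) v" using in_block_swap[OF i(2)] unfolding gf .
    ultimately show "\<exists>i<length ?L. in_block ?L i u \<and> in_block ?L i v"
      using in_block_less_length by blast
  qed
  have "K_adj ?L u v \<longleftrightarrow> K_adj ?L' (?f u) (?f v)" for u v
  proof -
    have "?f u = ?f v \<longleftrightarrow> u = v" using gf by metis
    then show ?thesis using same_block[of u v] unfolding K_adj_def swap_intervals_eq_0_iff by simp
  qed
  with bij show ?thesis unfolding graph_iso_def by blast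
qed

inductive adjacent_swap :: "'a list \<Rightarrow> 'a list \<Rightarrow> bool" where
  "adjacent_swap (xs @ a # b # ys) (xs @ b # a # ys)"

lemma adjacent_swap_Cons: "adjacent_swap xs ys \<Longrightarrow> adjacent_swap (c # xs) (c # ys)"
  by (induction rule: adjacent_swap.induct) (metis adjacent_swap.intros append_Cons)

lemma adjacent_swaps_Cons: "adjacent_swap\<^sup>*\<^sup>* xs ys \<Longrightarrow> adjacent_swap\<^sup>*\<^sup>* (c # xs) (c # ys)"
  by (induction rule: rtranclp_induct) (auto intro: rtranclp.rtrancl_into_rtrancl adjacent_swap_Cons)

lemma adjacent_swaps_move: "adjacent_swap\<^sup>*\<^sup>* (a # xs @ ys) (xs @ a # ys)"
proof (induction xs)
  case (Cons c xs)
  have "adjacent_swap (a # c # xs @ ys) (c # a # xs @ ys)"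
    using adjacent_swap.intros[of "[]"] by simp
  then show ?case
    using adjacent_swaps_Cons[OF Cons.IH] by simp (meson converse_rtranclp_into_rtranclp)
qed simp

lemma adjacent_swaps_if_mset_eq: "mset xs = mset ys \<Longrightarrow> adjacent_swap\<^sup>*\<^sup>* xs ys"
proof (induction xs arbitrary: ys)
  case (Cons a xs)
  then obtain ys1 ys2 where ys: "ys = ys1 @ a # ys2"
    by (metis list.set_intros(1) set_mset_mset split_list)
  with Cons have "adjacent_swap\<^sup>*\<^sup>* (a # xs) (a # ys1 @ ys2)"
    by (simp add: adjacent_swaps_Cons)
  then show ?case unfolding ys using adjacent_swaps_move by (meson rtranclp_trans)
qed simp

lemma adjacent_swap_graph_iso_K_adj:
  assumes "adjacent_swap xs ys"
  shows "sum_list ys = sum_list xs \<and> graph_iso (Suc (sum_list xs)) (K_adj xs) (K_adj ys)"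
  using assms
proof (induction rule: adjacent_swap.induct)
  case (1 xs a b ys)
  show ?case using graph_iso_K_adj_swap[of xs a b ys] by simp
qed

lemma graph_iso_K_adj_if_mset_eq:
  assumes "mset ns = mset ms"
  shows "graph_iso (Suc (sum_list ns)) (K_adj ns) (K_adj ms)"
proof -
  have "sum_list ms = sum_list ns \<and> graph_iso (Suc (sum_list ns)) (K_adj ns) (K_adj ms)"
    using adjacent_swaps_if_mset_eq[OF assms]
  proof (induction rule: rtranclp_induct)
    case (step ys zs)
    then show ?case using adjacent_swap_graph_iso_K_adj graph_iso_trans by metis
  qed (simp add: graph_iso_refl)
  then show ?thesis ..
qed

theorem theorem3p5:
  fixes n :: nat and ns ms :: "nat list"
  assumes "ns \<in> K_family n" and "ms \<in> K_family n"
    and "D_cospectral n (K_adj ns) (K_adj ms)"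
  shows "graph_iso n (K_adj ns) (K_adj ms)"
proof -
  have "mset ns = mset ms"
  proof (rule mset_eq_if_dist_poly_agree[OF assms(1,2)])
    fix t :: real assume "t > 0"
    have "poly (char_poly (dist_matrix n (K_adj ns))) (t - 1)
        = poly (char_poly (dist_matrix n (K_adj ms))) (t - 1)"
      using assms(3) unfolding D_cospectral_def by simp
    then show "t ^ (n - length ns - 1) * poly (dist_poly ns) t
        = t ^ (n - length ms - 1) * poly (dist_poly ms) t"
      unfolding poly_char_poly_dist_matrix_K_adj[OF assms(1) \<open>t > 0\<close>]
        poly_char_poly_dist_matrix_K_adj[OF assms(2) \<open>t > 0\<close>] .
  qed
  then have "graph_iso (Suc (sum_list ns)) (K_adj ns) (K_adj ms)"
    by (rule graph_iso_K_adj_if_mset_eq)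
  moreover have "Suc (sum_list ns) = n" using assms(1) by (simp add: K_family_def)
  ultimately show ?thesis by simp
qed

end
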